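(* Let $m\ge4$ and let $g(x_1,x_2,x_3)=a_1(cx_1+\alpha_1)^2+a_2(cx_2+\alpha_2)^2+a_3(cx_3+\alpha_3)^2$ be a tight regular complete quadratic polynomial where $a_1,a_2,a_3$ are positive integers with $\gcd(a_1,a_2,a_3)=1$ and $a_1\le a_2\le a_3$, the lattice $J=\langle a_1,a_2,a_3\rangle$ is $p$-stable for every prime $p\nmid c$, $\alpha_i\in\mathbb{Z}$ with $0<\alpha_i<c/2$, and $\gcd(c,\alpha_1\alpha_2\alpha_3)=1$. Let $T$ be the set of primes $p\ge5$ such that $J\otimes\mathbb{Z}_p$ is anisotropic, and $t=|T|$. Let $\kappa$ be a positive integer coprime to every prime in $T$, and let $\nu$ be a nonnegative integer such that $\delta c(\kappa n+\nu)+a_1\alpha_1^2+a_2\alpha_2^2+a_3\alpha_3^2$ is represented by $g$ over $\mathbb{Z}_2$ and over $\mathbb{Z}_3$ for every integer $n\ge0$. For $u\in\mathbb{Z}_{\ge0}$ let $\beta(u)=\delta c(\kappa u+\nu)+a_1\alpha_1^2+a_2\alpha_2^2+a_3\alpha_3^2$. Then for every positive integer $s\ge t$ and every positive integer $n$, $$\bigl|\{0\le u\le n-1:\ \beta(u)\text{ is represented by }g\text{ over }\mathbb{Z}\}\bigr|\ge\eta(n,s).$$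
   Context: Define $\delta=4$ if $m$ is odd, $\delta=2$ if $m\equiv2\pmod4$, $\delta=1$ if $m\equiv0\pmod4$, and $c=\delta\frac{m-2}{2}$. Representation by $g$ over $R\in\{\mathbb{Z},\mathbb{Z}_p,\mathbb{R}\}$ means solvability of $g(\mathbf{x})=n$ with $\mathbf{x}\in R^3$; $g$ is tight regular if it represents over $\mathbb{Z}$ every integer $\ge\min\{g(\mathbf{x}):\mathbf{x}\in\mathbb{Z}^3\}$ that is represented over every $\mathbb{Z}_p$ and over $\mathbb{R}$. For an odd prime $p$ with nonsquare unit $\Delta_p$, a diagonal ternary lattice $K$ is $p$-stable if $\langle1,-1\rangle$ is represented by $K\otimes\mathbb{Z}_p$ or $K\otimes\mathbb{Z}_p\cong\langle1,-\Delta_p\rangle\perp\langle p\epsilon\rangle$ with $\epsilon\in\mathbb{Z}_p^\times$; $K$ is $2$-stable if $K\otimes\mathbb{Z}_2$ is unimodular or $\langle1,3\rangle$ or $\langle1,7\rangle$ is represented by $K\otimes\mathbb{Z}_2$. The function $\eta$: let $P$ be the set of primes $\ge5$. For an odd prime $p$ and $s\ge1$ let $\psi_p(p^s)=\frac{p^s+p+2}{2p+2}$ if $s$ is odd and $\frac{p^s+2p+1}{2p+2}$ if $s$ is even. For $n\in\mathbb{N}$ with base-$p$ expansion $n=\sum_{i=0}^e b_ip^i$ ($0\le b_i\le p-1$), let $\psi_p(n)=\sum_{1\le i\le e}b_i\psi_p(p^i)$ if $b_0=0$ and $\psi_p(n)=1+\sum_{1\le i\le e}b_i\psi_p(p^i)$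 otherwise. Then $\eta(n,s)=\min\{n-\sum_{p\in P'}\psi_p(n):\ P'\subset P,\ |P'|=s\}$. *)

theory Defs
  imports Complex_Main "HOL-Number_Theory.Number_Theory"
begin

text \<open>Vectors in R^3 are functions on indices 0,1,2 (only these indices are used).\<close>

definition delta :: "nat \<Rightarrow> int" where
  "delta m = (if odd m then 4 else if m mod 4 = 2 then 2 else 1)"

definition cconst :: "nat \<Rightarrow> int" where
  "cconst m = (delta m * (int m - 2)) div 2"

definition gval :: "(nat \<Rightarrow> int) \<Rightarrow> int \<Rightarrow> (nat \<Rightarrow> int) \<Rightarrow> (nat \<Rightarrow> int) \<Rightarrow> int" where
  "gval a c al x = (\<Sum>i<3. a i * (c * x i + al i)^2)"

definition rep_Z :: "(nat \<Rightarrow> int) \<Rightarrow> int \<Rightarrow> (nat \<Rightarrow> int) \<Rightarrow> int \<Rightarrow> bool" where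
  "rep_Z a c al n = (\<exists>x. gval a c al x = n)"

definition rep_R :: "(nat \<Rightarrow> int) \<Rightarrow> int \<Rightarrow> (nat \<Rightarrow> int) \<Rightarrow> int \<Rightarrow> bool" where
  "rep_R a c al n = (\<exists>x :: nat \<Rightarrow> real.
      (\<Sum>i<3. of_int (a i) * (of_int c * x i + of_int (al i))^2) = of_int n)"

text \<open>Solvability over Z_p, expressed via solvability modulo every power p^k
  (equivalent by compactness of Z_p^3 and density of Z in Z_p).\<close>
definition rep_Zp :: "nat \<Rightarrow> (nat \<Rightarrow> int) \<Rightarrow> int \<Rightarrow> (nat \<Rightarrow> int) \<Rightarrow> int \<Rightarrow> bool" where
  "rep_Zp p a c al n = (\<forall>k::nat. \<exists>x. [gval a c al x = n] (mod (int p ^ k)))"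

definition tight_regular :: "(nat \<Rightarrow> int) \<Rightarrow> int \<Rightarrow> (nat \<Rightarrow> int) \<Rightarrow> bool" where
  "tight_regular a c al =
     (\<forall>n::int. n \<ge> Inf (range (gval a c al)) \<and> (\<forall>p. prime p \<longrightarrow> rep_Zp p a c al n)
        \<and> rep_R a c al n \<longrightarrow> rep_Z a c al n)"

definition bform :: "(nat \<Rightarrow> int) \<Rightarrow> (nat \<Rightarrow> int) \<Rightarrow> (nat \<Rightarrow> int) \<Rightarrow> int" where
  "bform a v w = (\<Sum>i<3. a i * v i * w i)"

definition det3 :: "(nat \<Rightarrow> int) \<Rightarrow> (nat \<Rightarrow> int) \<Rightarrow> (nat \<Rightarrow> int) \<Rightarrow> int" where
  "det3 u v w = u 0 * (v 1 * w 2 - v 2 * w 1) - v 0 * (u 1 * w 2 - u 2 * w 1)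
              + w 0 * (u 1 * v 2 - u 2 * v 1)"

text \<open>The binary lattice <b1,b2> is represented by <a> tensor Z_p: there are v,w in Z_p^3 with
  B(v,v)=b1, B(w,w)=b2, B(v,w)=0 (again via all congruences mod p^k).\<close>
definition lat_rep2 :: "nat \<Rightarrow> (nat \<Rightarrow> int) \<Rightarrow> int \<Rightarrow> int \<Rightarrow> bool" where
  "lat_rep2 p a b1 b2 = (\<forall>k::nat. \<exists>v w.
      [bform a v v = b1] (mod (int p ^ k)) \<and> [bform a w w = b2] (mod (int p ^ k))
      \<and> [bform a v w = 0] (mod (int p ^ k)))"

text \<open><a> tensor Z_p is isometric to <1,-D> perp <p e> for some p-adic unit e: there is
  a basis change T in GL_3(Z_p) (columns t1 t2 t3, det a unit) with T^t diag(a) T = diag(1,-D,p e).\<close>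
definition iso_split :: "nat \<Rightarrow> (nat \<Rightarrow> int) \<Rightarrow> int \<Rightarrow> bool" where
  "iso_split p a D = (\<forall>k::nat. \<exists>e t1 t2 t3. coprime e (int p) \<and> coprime (det3 t1 t2 t3) (int p)
      \<and> [bform a t1 t1 = 1] (mod (int p ^ k)) \<and> [bform a t2 t2 = - D] (mod (int p ^ k))
      \<and> [bform a t3 t3 = int p * e] (mod (int p ^ k))
      \<and> [bform a t1 t2 = 0] (mod (int p ^ k)) \<and> [bform a t1 t3 = 0] (mod (int p ^ k))
      \<and> [bform a t2 t3 = 0] (mod (int p ^ k)))"

definition p_stable :: "nat \<Rightarrow> (nat \<Rightarrow> int) \<Rightarrow> bool" where
  "p_stable p a =
    (if p = 2 then odd (a 0 * a 1 * a 2) \<or> lat_rep2 2 a 1 3 \<or> lat_rep2 2 a 1 7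
     else lat_rep2 p a 1 (-1) \<or>
       (\<exists>D. \<not> int p dvd D \<and> \<not> QuadRes (int p) D \<and> iso_split p a D))"

text \<open><a> tensor Z_p anisotropic: no nonzero x in Z_p^3 with Q(x)=0 (equivalently no primitive one;
  via congruences).\<close>
definition anisotropic :: "nat \<Rightarrow> (nat \<Rightarrow> int) \<Rightarrow> bool" where
  "anisotropic p a = (\<not> (\<forall>k::nat. \<exists>x. \<not> (\<forall>i<3. int p dvd x i)
      \<and> [bform a x x = 0] (mod (int p ^ k))))"

definition psi_pp :: "nat \<Rightarrow> nat \<Rightarrow> real" where
  "psi_pp p s = (if odd s then (real p ^ s + real p + 2) / (2 * real p + 2)
                 else (real p ^ s + 2 * real p + 1) / (2 * real p + 2))"

text \<open>Base-p digits b_i = (n div p^i) mod p; digits with i > e vanish, and e \<le> n.\<close>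
definition psi :: "nat \<Rightarrow> nat \<Rightarrow> real" where
  "psi p n = (if n mod p = 0 then 0 else 1)
             + (\<Sum>i\<in>{1..n}. real ((n div p ^ i) mod p) * psi_pp p i)"

definition eta :: "nat \<Rightarrow> nat \<Rightarrow> real" where
  "eta n s = Inf {real n - (\<Sum>p\<in>P'. psi p n) | P'.
      P' \<subseteq> {p. prime p \<and> p \<ge> 5} \<and> finite P' \<and> card P' = s}"

end

(*
  By tight regularity, a value beta(u) >= g(0) in the residue class of g modulo c is represented
  by g as soon as it is represented over every Z_p.  At 2 and 3 this is assumed.  At odd p
  dividing c one variable, Hensel-lifted, suffices.  At the remaining odd p, p-stability makes
  J_p either contain a hyperbolic plane, so that everything is represented, or be anisotropic of
  the form <1, -D, p e>; the latter misses exactly the values of odd p-order whose unit part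
  times e is a nonresidue.  Anisotropic primes divide 2 a_1 a_2 a_3, so there are at most t of
  them, and p does not divide the step delta c kappa of the progression.  Counting its bad terms
  block by block over the base-p digits of n gives at most psi_p(n) exceptions below n for each
  such p; discarding them and padding the set of primes to size s bounds the count by eta(n, s).
*)
theory Submission
  imports Defs
begin

section \<open>Congruences modulo prime powers\<close>

lemma QuadRes_cong: "[x = y] (mod m) \<Longrightarrow> QuadRes m x = QuadRes m y"
  unfolding QuadRes_def by (meson cong_sym cong_trans)

lemma exists_inverse_mod_prime_power:
  assumes "prime p" "\<not> int p dvd x"
  shows "\<exists>y. [x * y = 1] (mod int p ^ k)"
proof -
  have "prime (int p)" using assms(1) by simp
  then have "coprime x (int p)" using assms(2) by (metis coprime_commute prime_imp_coprime)
  then have "coprime x (int p ^ k)" by simp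
  then show ?thesis using cong_solve_coprime_int by blast
qed

lemma cong_prime_power_mono:
  "[x = y] (mod int p ^ k) \<Longrightarrow> j \<le> k \<Longrightarrow> [x = y] (mod int p ^ j)"
  by (erule cong_dvd_modulus) (rule le_imp_power_dvd)

lemma square_cong_imp_eq:
  fixes x y :: int
  assumes "prime p" "0 \<le> x" "2 * x < int p" "0 \<le> y" "2 * y < int p" "[x^2 = y^2] (mod int p)"
  shows "x = y"
proof -
  have "int p dvd (x - y) * (x + y)"
    using assms(6) by (simp add: cong_iff_dvd_diff power2_eq_square algebra_simps)
  then have "int p dvd x - y \<or> int p dvd x + y"
    using assms(1) prime_dvd_mult_iff[of "int p"] by simp
  then show ?thesis
  proof
    assume "int p dvd x - y"
    then have "x - y = 0 \<or> int p \<le> \<bar>x - y\<bar>" using dvd_imp_le_int[of "x - y" "int p"] by auto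
    then show ?thesis using assms(2-5) by linarith
  next
    assume "int p dvd x + y"
    then have "x + y = 0 \<or> int p \<le> \<bar>x + y\<bar>" using dvd_imp_le_int[of "x + y" "int p"] by auto
    then show ?thesis using assms(2-5) by linarith
  qed
qed

lemma linear_cong_root_unique:
  assumes "prime p" "\<not> int p dvd B" "w0 < p" "w1 < p"
    "int p dvd A + B * int w0" "int p dvd A + B * int w1"
  shows "w0 = w1"
proof -
  have "int p dvd B * (int w0 - int w1)"
    using dvd_diff[OF assms(5,6)] by (simp add: algebra_simps)
  then have "int p dvd int w0 - int w1"
    using assms(1,2) prime_dvd_mult_iff[of "int p"] by simp
  then have "int w0 - int w1 = 0 \<or> int p \<le> \<bar>int w0 - int w1\<bar>"
    using dvd_imp_le_int[of "int w0 - int w1" "int p"] by auto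
  then show ?thesis using assms(3,4) by linarith
qed

lemma linear_cong_root_exists:
  assumes "prime p" "\<not> int p dvd B"
  shows "\<exists>w<p. int p dvd A + B * int w"
proof -
  obtain B' where B': "[B * B' = 1] (mod int p)"
    using exists_inverse_mod_prime_power[OF assms, of 1] by auto
  define w where "w = nat ((- A * B') mod int p)"
  have p0: "int p > 0" using assms(1) prime_gt_0_nat by auto
  have w: "int w = (- A * B') mod int p" unfolding w_def using p0 by simp
  have "w < p" using w p0 by (metis of_nat_less_iff pos_mod_bound)
  moreover have "[A + B * int w = A + B * (- A * B')] (mod int p)"
    unfolding w by (intro cong_add cong_scalar_left) (auto simp: cong_def)
  moreover have "A + B * (- A * B') = A - A * (B * B')" by (simp add: algebra_simps)
  moreover have "[A - A * (B * B') = A - A * 1] (mod int p)"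
    by (intro cong_diff cong_scalar_left B') auto
  ultimately show ?thesis by (metis cong_0_iff cong_trans diff_self mult_1_right)
qed

section \<open>Values of an arithmetic progression missed by \<open>\<langle>1, -D, p e\<rangle>\<close>\<close>

text \<open>For \<open>b = True\<close> these are exactly the nonzero integers not represented over \<open>\<int>\<^sub>p\<close> by
  \<open>\<langle>1, -D, p e\<rangle>\<close> (D a nonresidue): odd order and \<open>e\<close> times the unit part a nonresidue.
  The class with \<open>b = False\<close> arises when the order drops by one.\<close>
definition bad_value :: "nat \<Rightarrow> int \<Rightarrow> bool \<Rightarrow> int \<Rightarrow> bool" where
  "bad_value p e b x \<longleftrightarrow> x \<noteq> 0 \<and> odd (multiplicity (int p) x) = b \<and>
     \<not> QuadRes (int p) (e * (x div int p ^ multiplicity (int p) x))"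

lemma bad_value_prime_times:
  assumes "prime p"
  shows "bad_value p e b (int p * y) = bad_value p e (\<not> b) y"
proof (cases "y = 0")
  case False
  have "\<not> is_unit (int p)" "int p \<noteq> 0" using assms by (auto simp: prime_gt_0_nat)
  then have "multiplicity (int p) (int p * y) = Suc (multiplicity (int p) y)"
    using multiplicity_times_same[OF False] by blast
  then show ?thesis using False \<open>int p \<noteq> 0\<close> unfolding bad_value_def by auto
qed (simp add: bad_value_def)

lemma bad_value_unit:
  assumes "\<not> int p dvd x"
  shows "bad_value p e b x \<longleftrightarrow> \<not> b \<and> \<not> QuadRes (int p) (e * x)"
  using assms not_dvd_imp_multiplicity_0[OF assms] unfolding bad_value_def by auto

lemma bad_value_True_imp_dvd: "bad_value p e True x \<Longrightarrow> int p dvd x"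
  unfolding bad_value_def
  by (metis dvd_power odd_pos multiplicity_dvd dvd_trans gr0_conv_Suc power_Suc dvd_triv_left)

lemma sum_lessThan_add:
  fixes f :: "nat \<Rightarrow> 'a::comm_monoid_add"
  shows "(\<Sum>w<a + b. f w) = (\<Sum>w<a. f w) + (\<Sum>w<b. f (a + w))"
  by (induction b) (auto simp: add.assoc)

lemma sum_lessThan_mult:
  fixes f :: "nat \<Rightarrow> 'a::comm_monoid_add"
  shows "(\<Sum>w<p * M. f w) = (\<Sum>w0<p. \<Sum>w1<M. f (w0 + p * w1))"
proof (induction M)
  case (Suc M)
  have "(\<Sum>w<p * Suc M. f w) = (\<Sum>w<p * M. f w) + (\<Sum>w<p. f (p * M + w))"
    using sum_lessThan_add[of f "p * M" p] by (simp add: add.commute)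
  also have "\<dots> = (\<Sum>w0<p. \<Sum>w1<Suc M. f (w0 + p * w1))"
    using Suc by (simp add: add.commute sum.distrib)
  finally show ?case .
qed simp

text \<open>Among the \<open>p - 1\<close> residues \<open>w\<close> with \<open>A + B w\<close> a unit, at least half make \<open>e (A + B w)\<close>
  a square: \<open>x \<mapsto> w\<close> with \<open>e (A + B w) \<equiv> x\<^sup>2\<close> is injective on \<open>1 \<le> x \<le> (p - 1)/2\<close>.\<close>
lemma card_nonresidue_values_le:
  assumes p: "prime p" "odd p" and B: "\<not> int p dvd B" and e: "\<not> int p dvd e"
    and ws: "ws < p" "int p dvd A + B * int ws"
  shows "card {w \<in> {..<p} - {ws}. \<not> QuadRes (int p) (e * (A + B * int w))} \<le> (p - 1) div 2"
proof -
  have pi: "prime (int p)" and p0: "int p > 0" using p(1) prime_gt_0_nat by auto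
  define S where "S = {..<p} - {ws}"
  define Sq where "Sq = {w \<in> S. QuadRes (int p) (e * (A + B * int w))}"
  have fS: "finite S" and cS: "card S = p - 1" unfolding S_def using ws by auto
  obtain B' where B': "[B * B' = 1] (mod int p)"
    using exists_inverse_mod_prime_power[OF p(1) B, of 1] by auto
  obtain e' where e': "[e * e' = 1] (mod int p)"
    using exists_inverse_mod_prime_power[OF p(1) e, of 1] by auto
  define h where "h x = nat ((e' * (int x)^2 - A) * B' mod int p)" for x :: nat
  have ih: "int (h x) = (e' * (int x)^2 - A) * B' mod int p" for x
    unfolding h_def using p0 by simp
  have hlt: "h x < p" for x using ih[of x] p0 by (metis of_nat_less_iff pos_mod_bound)
  have hsq: "[e * (A + B * int (h x)) = (int x)^2] (mod int p)" for x
  proof -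
    have "[e * (A + B * int (h x)) = e * (A + B * ((e' * (int x)^2 - A) * B'))] (mod int p)"
      unfolding ih by (intro cong_scalar_left cong_add cong_scalar_left) (auto simp: cong_def)
    also have "e * (A + B * ((e' * (int x)^2 - A) * B')) =
        e * A + (e * e') * (int x)^2 * (B * B') - e * A * (B * B')"
      by (simp add: algebra_simps)
    also have "[\<dots> = e * A + 1 * (int x)^2 * 1 - e * A * 1] (mod int p)"
      by (intro cong_add cong_diff cong_mult e' B') auto
    finally show ?thesis by simp
  qed
  have hin: "h x \<in> Sq" if x: "x \<in> {1..(p - 1) div 2}" for x
  proof -
    have "\<not> int p dvd A + B * int (h x)"
    proof
      assume "int p dvd A + B * int (h x)"
      then have "int p dvd e * (A + B * int (h x))" by simp
      then have "int p dvd (int x)^2" using cong_dvd_iff[OF hsq[of x]] by simp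
      then have "p dvd x" using pi prime_dvd_power by (metis int_dvd_int_iff)
      then show False using x by (auto dest: dvd_imp_le)
    qed
    moreover have "QuadRes (int p) (e * (A + B * int (h x)))"
      unfolding QuadRes_def using hsq[of x] cong_sym by blast
    ultimately show ?thesis unfolding Sq_def S_def using hlt ws by auto
  qed
  have "inj_on h {1..(p - 1) div 2}"
  proof
    fix x y assume x: "x \<in> {1..(p - 1) div 2}" and y: "y \<in> {1..(p - 1) div 2}" and "h x = h y"
    then have "[(int x)^2 = (int y)^2] (mod int p)"
      using hsq[of x] hsq[of y] by (metis cong_sym cong_trans)
    moreover have "2 * int x < int p" "2 * int y < int p" using x y p(2) by (auto elim!: oddE)
    ultimately show "x = y" using square_cong_imp_eq[OF p(1), of "int x" "int y"] by simp
  qed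
  then have "card {1..(p - 1) div 2} \<le> card Sq"
    using hin fS by (intro card_inj_on_le) (auto simp: Sq_def)
  then have half: "(p - 1) div 2 \<le> card Sq" by simp
  have "{w \<in> S. \<not> QuadRes (int p) (e * (A + B * int w))} = S - Sq"
    unfolding Sq_def by auto
  also have "card (S - Sq) = card S - card Sq"
    using fS by (intro card_Diff_subset) (auto simp: Sq_def)
  finally have "card {w \<in> S. \<not> QuadRes (int p) (e * (A + B * int w))} = (p - 1) - card Sq"
    using cS by simp
  moreover have "(p - 1) - (p - 1) div 2 = (p - 1) div 2" using p(2) by (auto elim!: oddE)
  ultimately show ?thesis using half unfolding S_def by linarith
qed

fun bad_block_bound :: "nat \<Rightarrow> nat \<Rightarrow> bool \<Rightarrow> nat" where
  "bad_block_bound p 0 b = 1"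
| "bad_block_bound p (Suc j) True = bad_block_bound p j False"
| "bad_block_bound p (Suc j) False = (p - 1) div 2 * p ^ j + bad_block_bound p j True"

text \<open>Write \<open>w = w\<^sub>0 + p w\<^sub>1\<close>. For the unique \<open>w\<^sub>0\<close> with \<open>p \<bar> A + B w\<^sub>0\<close> one divides by \<open>p\<close>,
  which flips the parity and recurses; for every other \<open>w\<^sub>0\<close> badness depends on \<open>w\<^sub>0\<close> alone.\<close>
lemma sum_bad_block_le:
  assumes p: "prime p" "odd p" and B: "\<not> int p dvd B" and e: "\<not> int p dvd e"
  shows "(\<Sum>w<p^j. of_bool (bad_value p e b (A + B * int w)) :: nat) \<le> bad_block_bound p j b"
proof (induction j arbitrary: A b)
  case 0
  then show ?case by (cases b) (auto simp: card_le_Suc0_iff_eq)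
next
  case (Suc j)
  obtain ws where ws: "ws < p" "int p dvd A + B * int ws"
    using linear_cong_root_exists[OF p(1) B] by blast
  then obtain A' where A': "A + B * int ws = int p * A'" by (elim dvdE)
  define f where "f w = (of_bool (bad_value p e b (A + B * int w)) :: nat)" for w
  define g where "g w0 = (\<Sum>w1<p^j. f (w0 + p * w1))" for w0
  have "(\<Sum>w<p^Suc j. f w) = (\<Sum>w0<p. g w0)"
    unfolding g_def using sum_lessThan_mult[of f p "p^j"] by simp
  also have "\<dots> = g ws + (\<Sum>w0\<in>{..<p} - {ws}. g w0)"
    using ws(1) by (simp add: sum.remove)
  finally have split: "(\<Sum>w<p^Suc j. f w) = g ws + (\<Sum>w0\<in>{..<p} - {ws}. g w0)" .
  have "A + B * int (ws + p * w1) = int p * (A' + B * int w1)" for w1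
    using A' by (simp add: algebra_simps)
  then have "g ws = (\<Sum>w1<p^j. of_bool (bad_value p e (\<not> b) (A' + B * int w1)))"
    unfolding g_def f_def using bad_value_prime_times[OF p(1)] by simp
  then have g_root: "g ws \<le> bad_block_bound p j (\<not> b)"
    using Suc.IH[where A = A' and b = "\<not> b"] by simp
  have g_other: "g w0 = p^j * of_bool (\<not> b \<and> \<not> QuadRes (int p) (e * (A + B * int w0)))"
    if w0: "w0 \<in> {..<p} - {ws}" for w0
  proof -
    have nd: "\<not> int p dvd A + B * int w0"
      using w0 ws linear_cong_root_unique[OF p(1) B, of w0 ws A] by auto
    have "f (w0 + p * w1) = of_bool (\<not> b \<and> \<not> QuadRes (int p) (e * (A + B * int w0)))" for w1
    proof -
      have eq: "A + B * int (w0 + p * w1) = (A + B * int w0) + int p * (B * int w1)"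
        by (simp add: algebra_simps)
      have "\<not> int p dvd A + B * int (w0 + p * w1)"
        unfolding eq using nd by (simp add: dvd_add_left_iff)
      moreover have "[e * (A + B * int (w0 + p * w1)) = e * (A + B * int w0)] (mod int p)"
        unfolding eq by (intro cong_scalar_left) (simp add: cong_def)
      ultimately show ?thesis unfolding f_def by (simp add: bad_value_unit QuadRes_cong)
    qed
    then show ?thesis unfolding g_def by simp
  qed
  show ?case
  proof (cases b)
    case True
    then show ?thesis using split g_root g_other unfolding f_def by simp
  next
    case False
    have "(\<Sum>w0\<in>{..<p} - {ws}. g w0) =
        p^j * card {w0 \<in> {..<p} - {ws}. \<not> QuadRes (int p) (e * (A + B * int w0))}"
      using g_other False by (simp add: sum_distrib_left[symmetric] Int_def conj_commute)
    also have "\<dots> \<le> p^j * ((p - 1) div 2)"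
      using card_nonresidue_values_le[OF p B e ws] by simp
    finally show ?thesis using split g_root False unfolding f_def by (simp add: mult.commute)
  qed
qed

lemma sum_bad_blocks_le:
  assumes p: "prime p" "odd p" and B: "\<not> int p dvd B" and e: "\<not> int p dvd e"
  shows "(\<Sum>w<p^j * k. of_bool (bad_value p e b (A + B * int w)) :: nat) \<le> k * bad_block_bound p j b"
proof (induction k arbitrary: A)
  case (Suc k)
  have "(\<Sum>w<p^j * Suc k. of_bool (bad_value p e b (A + B * int w)) :: nat) =
     (\<Sum>w<p^j * k. of_bool (bad_value p e b (A + B * int w))) +
     (\<Sum>w<p^j. of_bool (bad_value p e b ((A + B * int (p^j * k)) + B * int w)))"
    using sum_lessThan_add[of "\<lambda>w. of_bool (bad_value p e b (A + B * int w)) :: nat" "p^j * k" "p^j"]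
    by (simp add: algebra_simps)
  also have "\<dots> \<le> k * bad_block_bound p j b + bad_block_bound p j b"
    using Suc.IH[of A] sum_bad_block_le[OF p B e, where j = j and b = b and A = "A + B * int (p^j * k)"] by linarith
  finally show ?case by simp
qed simp

lemma bad_block_bound_eq_psi_pp:
  assumes "odd p"
  shows "real (bad_block_bound p (Suc j) True) = psi_pp p (Suc j)"
proof -
  have half: "real ((p - 1) div 2) = (real p - 1) / 2" using assms by (auto elim!: oddE)
  have den: "2 * real p + 2 \<noteq> 0" by (smt (verit) of_nat_0_le_iff)
  have "real (bad_block_bound p (Suc j) True) = psi_pp p (Suc j) \<and>
        real (bad_block_bound p (Suc (Suc j)) True) = psi_pp p (Suc (Suc j))"
  proof (induction j)
    case 0
    have "psi_pp p 1 = 1" "psi_pp p 2 = (real p + 1) / 2"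
      unfolding psi_pp_def using den by (simp_all add: field_simps power2_eq_square)
    then show ?case using half by (simp add: field_simps numeral_2_eq_2)
  next
    case (Suc j)
    have "real (bad_block_bound p (Suc (Suc (Suc j))) True) =
        (real p - 1) / 2 * real p ^ Suc j + psi_pp p (Suc j)"
      using Suc half by simp
    also have "\<dots> = psi_pp p (Suc (Suc (Suc j)))"
      unfolding psi_pp_def using den by (simp add: field_simps; simp add: algebra_simps)
    finally show ?case using Suc by simp
  qed
  then show ?thesis by simp
qed

function psi_tail :: "nat \<Rightarrow> nat \<Rightarrow> nat \<Rightarrow> real" where
  "psi_tail p j q =
     (if q = 0 \<or> p < 2 then 0 else real (q mod p) * psi_pp p j + psi_tail p (Suc j) (q div p))"
  by auto
termination by (relation "measure (\<lambda>(p, j, q). q)") auto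

declare psi_tail.simps [simp del]

lemma sum_bad_le_psi_tail:
  assumes p: "prime p" "odd p" and B: "\<not> int p dvd B" and e: "\<not> int p dvd e" and j: "j \<ge> 1"
  shows "real (\<Sum>w<p^j * q. of_bool (bad_value p e True (A + B * int w)) :: nat) \<le> psi_tail p j q"
  using j
proof (induction q arbitrary: A j rule: less_induct)
  case (less q)
  have p2: "p \<ge> 2" using p(1) prime_ge_2_nat by auto
  show ?case
  proof (cases "q = 0")
    case False
    define f where "f w = (of_bool (bad_value p e True (A + B * int w)) :: nat)" for w
    define A' where "A' = A + B * int (p^j * (q mod p))"
    have "p^j * q = p^j * (q mod p + p * (q div p))" by (simp only: mod_mult_div_eq)
    also have "\<dots> = p^j * (q mod p) + p^Suc j * (q div p)"
      by (simp only: distrib_left power_Suc ac_simps)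
    finally have digit: "p^j * q = p^j * (q mod p) + p^Suc j * (q div p)" .
    have "(\<Sum>w<p^j * q. f w) =
        (\<Sum>w<p^j * (q mod p). f w) + (\<Sum>w<p^Suc j * (q div p). f (p^j * (q mod p) + w))"
      unfolding digit by (rule sum_lessThan_add)
    also have "(\<Sum>w<p^Suc j * (q div p). f (p^j * (q mod p) + w)) =
        (\<Sum>w<p^Suc j * (q div p). of_bool (bad_value p e True (A' + B * int w)))"
      unfolding f_def A'_def by (simp add: algebra_simps)
    finally have "(\<Sum>w<p^j * q. f w) = (\<Sum>w<p^j * (q mod p). f w) +
        (\<Sum>w<p^Suc j * (q div p). of_bool (bad_value p e True (A' + B * int w)))" .
    moreover have "(\<Sum>w<p^j * (q mod p). f w) \<le> (q mod p) * bad_block_bound p j True"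
      unfolding f_def by (rule sum_bad_blocks_le[OF p B e])
    moreover have "real (bad_block_bound p j True) = psi_pp p j"
      using bad_block_bound_eq_psi_pp[OF p(2), of "j - 1"] less.prems by simp
    moreover have "real (\<Sum>w<p^Suc j * (q div p). of_bool (bad_value p e True (A' + B * int w)) :: nat)
        \<le> psi_tail p (Suc j) (q div p)"
      using less.IH[of "q div p" "Suc j"] False p2 by simp
    moreover have "psi_tail p j q = real (q mod p) * psi_pp p j + psi_tail p (Suc j) (q div p)"
      using False p2 by (subst psi_tail.simps) simp
    ultimately show ?thesis unfolding f_def
      by (smt (verit) of_nat_add of_nat_le_iff of_nat_mult)
  qed (simp add: psi_tail.simps)
qed

lemma psi_tail_eq_digit_sum:
  assumes "p \<ge> 2" "q < p^L"
  shows "psi_tail p j q = (\<Sum>i<L. real (q div p^i mod p) * psi_pp p (i + j))"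
  using assms(2)
proof (induction L arbitrary: q j)
  case (Suc L)
  have "q div p < p^L" using Suc.prems by (simp add: less_mult_imp_div_less mult.commute)
  then have "psi_tail p (Suc j) (q div p) = (\<Sum>i<L. real (q div p^Suc i mod p) * psi_pp p (Suc i + j))"
    using Suc.IH by (simp add: div_mult2_eq)
  moreover have "(\<Sum>i<Suc L. real (q div p^i mod p) * psi_pp p (i + j)) =
      real (q mod p) * psi_pp p j + (\<Sum>i<L. real (q div p^Suc i mod p) * psi_pp p (Suc i + j))"
    by (subst sum.lessThan_Suc_shift) simp
  ultimately show ?case using assms(1)
    by (cases "q = 0") (simp_all add: psi_tail.simps[of p j])
qed (simp add: psi_tail.simps)

lemma psi_eq_psi_tail:
  assumes "p \<ge> 2"
  shows "psi p n = (if n mod p = 0 then 0 else 1) + psi_tail p 1 (n div p)"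
proof -
  have "n div p \<le> n" by simp
  also have "n < 2 ^ n" by (rule less_exp)
  also have "(2::nat) ^ n \<le> p ^ n" using assms by (simp add: power_mono)
  finally have "n div p < p ^ n" .
  then have "psi_tail p 1 (n div p) = (\<Sum>i<n. real (n div p ^ Suc i mod p) * psi_pp p (Suc i))"
    using psi_tail_eq_digit_sum[OF assms] by (simp add: div_mult2_eq)
  then show ?thesis unfolding psi_def by (simp add: sum.atLeast1_atMost_eq)
qed

lemma card_bad_le_psi:
  assumes p: "prime p" "odd p" and B: "\<not> int p dvd B" and e: "\<not> int p dvd e"
  shows "real (card {u \<in> {0..<n}. bad_value p e True (A + B * int u)}) \<le> psi p n"
proof -
  have p2: "p \<ge> 2" using p(1) prime_ge_2_nat by auto
  define f where "f w = (of_bool (bad_value p e True (A + B * int w)) :: nat)" for w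
  define A' where "A' = A + B * int (p * (n div p))"
  have "card {u \<in> {0..<n}. bad_value p e True (A + B * int u)} = (\<Sum>w<n. f w)"
    unfolding f_def by (simp add: Int_def atLeast0LessThan)
  also have "\<dots> = (\<Sum>w<p^1 * (n div p). f w) + card ({..<n mod p} \<inter> {w. bad_value p e True (A' + B * int w)})"
    using sum_lessThan_add[of f "p * (n div p)" "n mod p"]
    unfolding f_def A'_def by (simp add: algebra_simps)
  finally have split: "card {u \<in> {0..<n}. bad_value p e True (A + B * int u)} =
      (\<Sum>w<p^1 * (n div p). f w) + card ({..<n mod p} \<inter> {w. bad_value p e True (A' + B * int w)})" .
  have "real (\<Sum>w<p^1 * (n div p). f w) \<le> psi_tail p 1 (n div p)"
    unfolding f_def by (rule sum_bad_le_psi_tail[OF p B e]) simp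
  moreover have "card ({..<n mod p} \<inter> {w. bad_value p e True (A' + B * int w)}) \<le>
      (if n mod p = 0 then 0 else 1)"
  proof -
    have "n mod p < p" using p2 by simp
    then have "card ({..<n mod p} \<inter> {w. bad_value p e True (A' + B * int w)}) \<le> 1"
      using linear_cong_root_unique[OF p(1) B, of _ _ A'] bad_value_True_imp_dvd
      by (auto simp: card_le_Suc0_iff_eq)
    then show ?thesis by auto
  qed
  ultimately show ?thesis unfolding split psi_eq_psi_tail[OF p2]
    by (smt (verit) of_nat_add of_nat_le_iff of_nat_1 of_nat_0)
qed

section \<open>Hensel lifting and binary forms\<close>

lemma hensel_lift_square:
  assumes p: "prime p" "odd p" and a: "\<not> int p dvd a" and y0: "\<not> int p dvd y0"
    and k: "k \<ge> 1" and c: "[a * y0^2 = t] (mod int p ^ k)"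
  shows "\<exists>y. [y = y0] (mod int p ^ k) \<and> [a * y^2 = t] (mod int p ^ K)"
proof (induction K)
  case 0
  then show ?case by (intro exI[of _ y0]) simp
next
  case (Suc K)
  show ?case
  proof (cases "Suc K \<le> k")
    case True
    then show ?thesis using cong_prime_power_mono[OF c True] by (intro exI[of _ y0]) simp
  next
    case False
    then have Kk: "k \<le> K" by simp
    obtain y where y: "[y = y0] (mod int p ^ k)" "[a * y^2 = t] (mod int p ^ K)" using Suc.IH by blast
    have pi: "prime (int p)" using p(1) by simp
    have "[y = y0] (mod int p)" using cong_prime_power_mono[OF y(1), of 1] k by simp
    then have "\<not> int p dvd y" using y0 cong_dvd_iff by blast
    moreover have "\<not> int p dvd 2"
      using p prime_ge_2_nat[of p] by (auto dest!: zdvd_imp_le elim: oddE)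
    ultimately have "\<not> int p dvd 2 * a * y" using a pi by (simp add: prime_dvd_mult_iff)
    then obtain i where i: "[2 * a * y * i = 1] (mod int p)"
      using exists_inverse_mod_prime_power[OF p(1), of _ 1] by auto
    then obtain r where r: "2 * a * y * i - 1 = int p * r" by (metis cong_iff_dvd_diff dvdE)
    obtain m where m: "t - a * y^2 = int p ^ K * m"
      using y(2) by (metis cong_iff_dvd_diff cong_sym dvdE)
    define y' where "y' = y + int p ^ K * (m * i)"
    have "[y' = y] (mod int p ^ k)"
      using le_imp_power_dvd[OF Kk, of "int p"] unfolding y'_def
      by (simp add: cong_iff_dvd_diff)
    then have "[y' = y0] (mod int p ^ k)" using y(1) by (rule cong_trans)
    moreover
    \<comment> \<open>Newton step: the linear term cancels \<open>t - a y\<^sup>2\<close> modulo \<open>p\<^sup>K\<^sup>+\<^sup>1\<close>.\<close>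
    have "a * y'^2 - t = int p ^ Suc K * (m * r) + int p ^ Suc K * (int p ^ (K - 1) * a * (m * i)^2)"
    proof -
      have "K + K = Suc K + (K - 1)" using Kk k by simp
      then have PP: "int p ^ K * int p ^ K = int p ^ Suc K * int p ^ (K - 1)"
        by (metis power_add)
      have "a * y'^2 - t = int p ^ K * m * (2 * a * y * i - 1) + a * (m * i)^2 * (int p ^ K * int p ^ K)"
        using m unfolding y'_def by (simp add: power2_eq_square algebra_simps)
      also have "\<dots> = int p ^ K * m * (int p * r) + a * (m * i)^2 * (int p ^ Suc K * int p ^ (K - 1))"
        unfolding r PP ..
      also have "\<dots> = int p ^ Suc K * (m * r) + int p ^ Suc K * (int p ^ (K - 1) * a * (m * i)^2)"
        by (simp add: algebra_simps)
      finally show ?thesis .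
    qed
    then have "[a * y'^2 = t] (mod int p ^ Suc K)" unfolding cong_iff_dvd_diff by simp
    ultimately show ?thesis by blast
  qed
qed

lemma quadratic_sum_cong_solvable:
  assumes p: "prime p" "odd p" and \<alpha>: "\<not> int p dvd \<alpha>" and \<beta>: "\<not> int p dvd \<beta>"
  shows "\<exists>x y. [\<alpha> * x^2 + \<beta> * y^2 = \<gamma>] (mod int p)"
proof -
  from p(2) obtain k where pk: "p = 2 * k + 1" by (auto elim: oddE)
  define I where "I = {0..int k}"
  have sq_inj: "x = x'" if "\<not> int p dvd c" "x \<in> I" "x' \<in> I" "int p dvd c * x^2 - c * x'^2"
    for c x x'
  proof -
    have "c * x^2 - c * x'^2 = c * (x^2 - x'^2)" by (simp add: algebra_simps)
    then have "[x^2 = x'^2] (mod int p)"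
      using that p(1) prime_dvd_mult_iff[of "int p"] by (auto simp: cong_iff_dvd_diff)
    then show ?thesis using square_cong_imp_eq[OF p(1), of x x'] that(2,3) pk unfolding I_def by auto
  qed
  \<comment> \<open>Pigeonhole: both \<open>\<alpha> x\<^sup>2\<close> and \<open>\<gamma> - \<beta> y\<^sup>2\<close> take \<open>(p + 1)/2\<close> distinct values mod \<open>p\<close>.\<close>
  define X where "X = (\<lambda>x. (\<alpha> * x^2) mod int p) ` I"
  define Y where "Y = (\<lambda>y. (\<gamma> - \<beta> * y^2) mod int p) ` I"
  have "inj_on (\<lambda>x. (\<alpha> * x^2) mod int p) I"
    by (rule inj_onI) (use sq_inj[OF \<alpha>] in \<open>simp add: mod_eq_dvd_iff\<close>)
  then have cX: "card X = k + 1" unfolding X_def I_def by (simp add: card_image)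
  have "inj_on (\<lambda>y. (\<gamma> - \<beta> * y^2) mod int p) I"
    by (rule inj_onI) (use sq_inj[OF \<beta>] in \<open>force simp add: mod_eq_dvd_iff\<close>)
  then have cY: "card Y = k + 1" unfolding Y_def I_def by (simp add: card_image)
  have "X \<inter> Y \<noteq> {}"
  proof
    assume disj: "X \<inter> Y = {}"
    have "X \<union> Y \<subseteq> {0..<int p}" unfolding X_def Y_def using pk by auto
    then have "card (X \<union> Y) \<le> card {0..<int p}" by (intro card_mono) auto
    then have "card (X \<union> Y) \<le> 2 * k + 1" using pk by simp
    moreover have "card (X \<union> Y) = 2 * k + 2"
      using card_Un_disjoint[OF _ _ disj] cX cY unfolding X_def Y_def I_def by simp
    ultimately show False by simp
  qed
  then obtain x y where "(\<alpha> * x^2) mod int p = (\<gamma> - \<beta> * y^2) mod int p"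
    unfolding X_def Y_def by auto
  then have "[\<alpha> * x^2 + \<beta> * y^2 = \<gamma>] (mod int p)"
    by (simp add: mod_eq_dvd_iff cong_iff_dvd_diff algebra_simps)
  then show ?thesis by blast
qed

lemma binary_form_represents_unit:
  assumes p: "prime p" "odd p" and \<alpha>: "\<not> int p dvd \<alpha>" and \<beta>: "\<not> int p dvd \<beta>"
    and \<eta>: "\<not> int p dvd \<eta>"
  shows "\<exists>y1 y2. [\<alpha> * y1^2 + \<beta> * y2^2 = \<eta>] (mod int p ^ K)"
proof -
  obtain x y where xy: "[\<alpha> * x^2 + \<beta> * y^2 = \<eta>] (mod int p)"
    using quadratic_sum_cong_solvable[OF p \<alpha> \<beta>] by blast
  show ?thesis
  proof (cases "int p dvd x")
    case False
    have "[\<alpha> * x^2 = \<eta> - \<beta> * y^2] (mod int p ^ 1)"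
      using xy by (simp add: cong_iff_dvd_diff algebra_simps)
    then obtain y1 where "[\<alpha> * y1^2 = \<eta> - \<beta> * y^2] (mod int p ^ K)"
      using hensel_lift_square[OF p \<alpha> False, of 1] by auto
    then have "[\<alpha> * y1^2 + \<beta> * y^2 = \<eta>] (mod int p ^ K)"
      by (simp add: cong_iff_dvd_diff algebra_simps)
    then show ?thesis by blast
  next
    case True
    have "\<not> int p dvd y"
    proof
      assume "int p dvd y"
      then have "int p dvd \<alpha> * x^2 + \<beta> * y^2" using True by (simp add: power2_eq_square)
      then show False using \<eta> cong_dvd_iff[OF xy] by simp
    qed
    moreover have "[\<beta> * y^2 = \<eta> - \<alpha> * x^2] (mod int p ^ 1)"
      using xy by (simp add: cong_iff_dvd_diff algebra_simps)
    ultimately obtain y2 where "[\<beta> * y2^2 = \<eta> - \<alpha> * x^2] (mod int p ^ K)"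
      using hensel_lift_square[OF p \<beta>, of y 1] by auto
    then have "[\<alpha> * x^2 + \<beta> * y2^2 = \<eta>] (mod int p ^ K)"
      by (simp add: cong_iff_dvd_diff algebra_simps)
    then show ?thesis by blast
  qed
qed

section \<open>The diagonal form \<open>\<langle>a\<^sub>0, a\<^sub>1, a\<^sub>2\<rangle>\<close> over \<open>\<int>\<^sub>p\<close>\<close>

lemma sum_lessThan_3: "(\<Sum>i<3. f i) = f 0 + f 1 + f (2::nat)"
  by (simp add: eval_nat_numeral)

lemma all_lessThan_3: "(\<forall>i<3. P i) \<longleftrightarrow> P 0 \<and> P 1 \<and> P (2::nat)"
  by (auto simp: eval_nat_numeral less_Suc_eq)

lemma bform_expand: "bform a v w = a 0 * v 0 * w 0 + a 1 * v 1 * w 1 + a 2 * v 2 * w 2"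
  unfolding bform_def sum_lessThan_3 ..

lemma bform_lincomb2:
  "bform a (\<lambda>i. s * v i + t * w i) (\<lambda>i. s * v i + t * w i)
     = s^2 * bform a v v + 2 * s * t * bform a v w + t^2 * bform a w w"
  unfolding bform_expand by (simp add: algebra_simps power2_eq_square)

lemma bform_lincomb3:
  "bform a (\<lambda>i. y1 * t1 i + y2 * t2 i + y3 * t3 i) (\<lambda>i. y1 * t1 i + y2 * t2 i + y3 * t3 i)
   = y1^2 * bform a t1 t1 + y2^2 * bform a t2 t2 + y3^2 * bform a t3 t3
     + 2 * y1 * y2 * bform a t1 t2 + 2 * y1 * y3 * bform a t1 t3 + 2 * y2 * y3 * bform a t2 t3"
  unfolding bform_expand by (simp add: algebra_simps power2_eq_square)

lemma det3_cramer:
  assumes "i < 3"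
  shows "det3 x t2 t3 * t1 i + det3 t1 x t3 * t2 i + det3 t1 t2 x * t3 i = det3 t1 t2 t3 * x i"
proof -
  have "i = 0 \<or> i = 1 \<or> i = 2" using assms by auto
  then show ?thesis unfolding det3_def by (elim disjE) (simp_all add: algebra_simps)
qed

lemma rep_Zp_of_bform:
  assumes p: "prime p" and c: "\<not> int p dvd c"
    and rep: "\<forall>K. \<exists>y. [bform a y y = \<beta>] (mod int p ^ K)"
  shows "rep_Zp p a c al \<beta>"
  unfolding rep_Zp_def
proof
  fix K
  obtain y where y: "[bform a y y = \<beta>] (mod int p ^ K)" using rep by blast
  obtain c' where c': "[c * c' = 1] (mod int p ^ K)"
    using exists_inverse_mod_prime_power[OF p c] by blast
  define x where "x i = c' * (y i - al i)" for i
  have xy: "[c * x i + al i = y i] (mod int p ^ K)" for i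
  proof -
    have "c * x i + al i = (c * c') * (y i - al i) + al i" unfolding x_def by (simp add: algebra_simps)
    also have "[\<dots> = 1 * (y i - al i) + al i] (mod int p ^ K)"
      by (intro cong_add cong_scalar_right c') auto
    finally show ?thesis by simp
  qed
  have "[gval a c al x = bform a y y] (mod int p ^ K)"
    unfolding gval_def bform_def power2_eq_square mult.assoc[symmetric]
    by (intro cong_sum cong_mult cong_scalar_left xy)
  then show "\<exists>x. [gval a c al x = \<beta>] (mod int p ^ K)" using y cong_trans by blast
qed

lemma bform_represents_of_hyperbolic:
  assumes p: "odd p" and L: "lat_rep2 p a 1 (-1)"
  shows "\<exists>y. [bform a y y = \<beta>] (mod int p ^ K)"
proof -
  obtain v w where vw: "[bform a v v = 1] (mod int p ^ K)" "[bform a w w = -1] (mod int p ^ K)"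
      "[bform a v w = 0] (mod int p ^ K)"
    using L unfolding lat_rep2_def by blast
  obtain h where h: "int p ^ K + 1 = 2 * h"
    using p by (metis dvd_def even_add even_power odd_one of_nat_eq_0_iff even_of_nat)
  \<comment> \<open>\<open>h\<close> is \<open>1/2\<close> modulo \<open>p\<^sup>K\<close>, and \<open>((\<beta> + 1)/2)\<^sup>2 - ((\<beta> - 1)/2)\<^sup>2 = \<beta>\<close>.\<close>
  define s where "s = (\<beta> + 1) * h"
  define t where "t = (\<beta> - 1) * h"
  have "bform a (\<lambda>i. s * v i + t * w i) (\<lambda>i. s * v i + t * w i) =
      s^2 * bform a v v + 2 * s * t * bform a v w + t^2 * bform a w w"
    by (rule bform_lincomb2)
  also have "[\<dots> = s^2 * 1 + 2 * s * t * 0 + t^2 * (-1)] (mod int p ^ K)"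
    by (intro cong_add cong_scalar_left vw)
  also have "s^2 * 1 + 2 * s * t * 0 + t^2 * (-1) = \<beta> * (2 * h)^2"
    unfolding s_def t_def by (simp add: algebra_simps power2_eq_square)
  also have "\<dots> = \<beta> + int p ^ K * (\<beta> * (int p ^ K + 2))"
    unfolding h[symmetric] by (simp add: algebra_simps power2_eq_square)
  also have "[\<beta> + int p ^ K * (\<beta> * (int p ^ K + 2)) = \<beta>] (mod int p ^ K)"
    by (simp add: cong_iff_dvd_diff)
  finally show ?thesis by blast
qed

lemma not_anisotropic_of_hyperbolic:
  assumes p: "prime p" and L: "lat_rep2 p a 1 (-1)"
  shows "\<not> anisotropic p a"
  unfolding anisotropic_def not_not
proof (intro allI)
  fix k
  obtain v w where vw: "[bform a v v = 1] (mod int p ^ (k + 1))"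
      "[bform a w w = -1] (mod int p ^ (k + 1))" "[bform a v w = 0] (mod int p ^ (k + 1))"
    using L unfolding lat_rep2_def by blast
  have v1: "[bform a v v = 1] (mod int p)" and vw1: "[bform a v w = 0] (mod int p)"
    using cong_prime_power_mono[OF vw(1), of 1] cong_prime_power_mono[OF vw(3), of 1] by simp_all
  define x where "x i = v i + w i" for i
  have "bform a x x = 1^2 * bform a v v + 2 * 1 * 1 * bform a v w + 1^2 * bform a w w"
    unfolding x_def using bform_lincomb2[of a 1 v 1 w] by simp
  also have "[\<dots> = 1^2 * 1 + 2 * 1 * 1 * 0 + 1^2 * (-1)] (mod int p ^ (k + 1))"
    by (intro cong_add cong_scalar_left vw)
  finally have "[bform a x x = 0] (mod int p * int p ^ k)" by simp
  then have "[bform a x x = 0] (mod int p ^ k)" by (rule cong_dvd_modulus) simp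
  moreover have "\<not> (\<forall>i<3. int p dvd x i)"
  proof
    assume "\<forall>i<3. int p dvd x i"
    then have "int p dvd bform a v x" unfolding bform_expand all_lessThan_3 by simp
    moreover have "bform a v x = bform a v v + bform a v w"
      unfolding bform_expand x_def by (simp add: algebra_simps)
    moreover have "[bform a v v + bform a v w = 1 + 0] (mod int p)" by (intro cong_add v1 vw1)
    ultimately have "int p dvd 1" using cong_dvd_iff by fastforce
    then show False using prime_gt_1_nat[OF p] by simp
  qed
  ultimately show "\<exists>x. \<not> (\<forall>i<3. int p dvd x i) \<and> [bform a x x = 0] (mod int p ^ k)" by blast
qed

lemma not_anisotropic_of_units:
  assumes p: "prime p" "odd p" and a: "\<forall>i<3. \<not> int p dvd a i"
  shows "\<not> anisotropic p a"
  unfolding anisotropic_def not_not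
proof (intro allI)
  fix k
  obtain y1 y2 where y: "[a 0 * y1^2 + a 1 * y2^2 = - a 2] (mod int p ^ k)"
    using binary_form_represents_unit[OF p, of "a 0" "a 1" "- a 2" k] a
    unfolding all_lessThan_3 by auto
  define x where "x i = (if i = 0 then y1 else if i = 1 then y2 else 1)" for i :: nat
  have "bform a x x = (a 0 * y1^2 + a 1 * y2^2) + a 2"
    unfolding bform_expand x_def by (simp add: power2_eq_square)
  also have "[\<dots> = - a 2 + a 2] (mod int p ^ k)" by (intro cong_add y) auto
  finally have "[bform a x x = 0] (mod int p ^ k)" by simp
  moreover have "\<not> int p dvd x 2" unfolding x_def using prime_gt_1_nat[OF p(1)] by simp
  ultimately show "\<exists>x. \<not> (\<forall>i<3. int p dvd x i) \<and> [bform a x x = 0] (mod int p ^ k)"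
    by (metis lessI numeral_2_eq_2 numeral_3_eq_3)
qed

definition iso_split_at :: "nat \<Rightarrow> (nat \<Rightarrow> int) \<Rightarrow> int \<Rightarrow> int \<Rightarrow> nat \<Rightarrow>
    (nat \<Rightarrow> int) \<Rightarrow> (nat \<Rightarrow> int) \<Rightarrow> (nat \<Rightarrow> int) \<Rightarrow> bool" where
  "iso_split_at p a D e k t1 t2 t3 \<longleftrightarrow> coprime e (int p) \<and> coprime (det3 t1 t2 t3) (int p)
      \<and> [bform a t1 t1 = 1] (mod (int p ^ k)) \<and> [bform a t2 t2 = - D] (mod (int p ^ k))
      \<and> [bform a t3 t3 = int p * e] (mod (int p ^ k))
      \<and> [bform a t1 t2 = 0] (mod (int p ^ k)) \<and> [bform a t1 t3 = 0] (mod (int p ^ k))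
      \<and> [bform a t2 t3 = 0] (mod (int p ^ k))"

lemma iso_split_iff: "iso_split p a D \<longleftrightarrow> (\<forall>k. \<exists>e t1 t2 t3. iso_split_at p a D e k t1 t2 t3)"
  unfolding iso_split_def iso_split_at_def ..

lemma iso_split_at_mono:
  "iso_split_at p a D e k t1 t2 t3 \<Longrightarrow> j \<le> k \<Longrightarrow> iso_split_at p a D e j t1 t2 t3"
  unfolding iso_split_at_def using cong_prime_power_mono by blast

lemma iso_split_at_unit:
  assumes "prime p" "iso_split_at p a D e k t1 t2 t3"
  shows "\<not> int p dvd e"
proof
  assume "int p dvd e"
  moreover have "coprime e (int p)" using assms(2) unfolding iso_split_at_def by blast
  ultimately have "is_unit (int p)" by (metis coprime_absorb_right)
  moreover have "prime (int p)" using assms(1) by simp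
  ultimately show False using not_prime_unit by blast
qed

lemma iso_split_at_value:
  assumes "iso_split_at p a D e k t1 t2 t3"
  shows "[bform a (\<lambda>i. y1 * t1 i + y2 * t2 i + y3 * t3 i) (\<lambda>i. y1 * t1 i + y2 * t2 i + y3 * t3 i)
          = y1^2 - D * y2^2 + int p * e * y3^2] (mod int p ^ k)"
proof -
  have "[y1^2 * bform a t1 t1 + y2^2 * bform a t2 t2 + y3^2 * bform a t3 t3
     + 2 * y1 * y2 * bform a t1 t2 + 2 * y1 * y3 * bform a t1 t3 + 2 * y2 * y3 * bform a t2 t3
     = y1^2 * 1 + y2^2 * (- D) + y3^2 * (int p * e) + 2 * y1 * y2 * 0 + 2 * y1 * y3 * 0
       + 2 * y2 * y3 * 0] (mod int p ^ k)"
    using assms unfolding iso_split_at_def by (intro cong_add cong_scalar_left) auto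
  then show ?thesis unfolding bform_lincomb3 by (simp add: algebra_simps)
qed

text \<open>Cramer's rule modulo \<open>p\<^sup>2\<close> expresses \<open>x\<close> in the basis \<open>t1, t2, t3\<close>.\<close>
lemma iso_split_at_coordinates:
  assumes p: "prime p" and d: "iso_split_at p a D e 2 t1 t2 t3"
  obtains y1 y2 y3 where "[bform a x x = y1^2 - D * y2^2 + int p * e * y3^2] (mod int p ^ 2)"
    and "int p dvd y1 \<Longrightarrow> int p dvd y2 \<Longrightarrow> int p dvd y3 \<Longrightarrow> \<forall>i<3. int p dvd x i"
proof -
  have "coprime (det3 t1 t2 t3) (int p ^ 2)" using d unfolding iso_split_at_def by simp
  then obtain d' where d': "[det3 t1 t2 t3 * d' = 1] (mod int p ^ 2)"
    using cong_solve_coprime_int by blast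
  define y1 where "y1 = d' * det3 x t2 t3"
  define y2 where "y2 = d' * det3 t1 x t3"
  define y3 where "y3 = d' * det3 t1 t2 x"
  define z where "z i = y1 * t1 i + y2 * t2 i + y3 * t3 i" for i
  have zx: "[z i = x i] (mod int p ^ 2)" if "i < 3" for i
  proof -
    have "z i = d' * (det3 x t2 t3 * t1 i + det3 t1 x t3 * t2 i + det3 t1 t2 x * t3 i)"
      unfolding z_def y1_def y2_def y3_def by (simp add: algebra_simps)
    also have "\<dots> = (det3 t1 t2 t3 * d') * x i" using det3_cramer[OF that] by simp
    also have "[\<dots> = 1 * x i] (mod int p ^ 2)" by (intro cong_scalar_right d')
    finally show ?thesis by simp
  qed
  have "[bform a x x = bform a z z] (mod int p ^ 2)"
    unfolding bform_def using zx by (intro cong_sum cong_mult cong_scalar_left) (auto intro: cong_sym)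
  also have "[bform a z z = y1^2 - D * y2^2 + int p * e * y3^2] (mod int p ^ 2)"
    unfolding z_def by (rule iso_split_at_value[OF d])
  finally have "[bform a x x = y1^2 - D * y2^2 + int p * e * y3^2] (mod int p ^ 2)" .
  moreover have "\<forall>i<3. int p dvd x i" if "int p dvd y1" "int p dvd y2" "int p dvd y3"
  proof (intro allI impI)
    fix i :: nat assume i: "i < 3"
    have "int p dvd z i" unfolding z_def using that by simp
    moreover have "[z i = x i] (mod int p)" using cong_prime_power_mono[OF zx[OF i], of 1] by simp
    ultimately show "int p dvd x i" using cong_dvd_iff by blast
  qed
  ultimately show ?thesis using that by blast
qed

text \<open>Since \<open>D\<close> is a nonresidue, \<open>y1\<^sup>2 \<equiv> D y2\<^sup>2 (mod p)\<close> forces \<open>p \<bar> y1, y2\<close>; then the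
  \<open>p\<^sup>2\<close>-terms drop out.\<close>
lemma split_form_cong_p_multiple:
  assumes p: "prime p" and D: "\<not> QuadRes (int p) D"
    and c: "[y1^2 - D * y2^2 + int p * e * y3^2 = int p * f] (mod int p ^ 2)"
  shows "int p dvd y1 \<and> int p dvd y2 \<and> [e * y3^2 = f] (mod int p)"
proof -
  have pi: "prime (int p)" using p by simp
  have "[y1^2 - D * y2^2 + int p * e * y3^2 = int p * f] (mod int p)"
    using cong_prime_power_mono[OF c, of 1] by simp
  then have "int p dvd y1^2 - D * y2^2 + int p * (e * y3^2 - f)"
    by (simp add: cong_iff_dvd_diff algebra_simps)
  then have c1: "[y1^2 = D * y2^2] (mod int p)"
    by (simp add: cong_iff_dvd_diff dvd_add_left_iff)
  have y2: "int p dvd y2"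
  proof (rule ccontr)
    assume "\<not> int p dvd y2"
    then obtain i where i: "[y2 * i = 1] (mod int p)"
      using exists_inverse_mod_prime_power[OF p, of y2 1] by auto
    have "[(y1 * i)^2 = D * (y2 * i)^2] (mod int p)"
      using cong_scalar_right[OF c1, of "i^2"] by (simp add: power_mult_distrib algebra_simps)
    also have "[D * (y2 * i)^2 = D * 1^2] (mod int p)" by (intro cong_scalar_left cong_pow i)
    finally have "QuadRes (int p) D" unfolding QuadRes_def by auto
    then show False using D by simp
  qed
  then have "int p dvd D * y2^2" by (simp add: power2_eq_square)
  then have "int p dvd y1^2" using cong_dvd_iff[OF c1] by simp
  then have y1: "int p dvd y1" using pi prime_dvd_power by blast
  obtain u1 u2 where u: "y1 = int p * u1" "y2 = int p * u2" using y1 y2 by (elim dvdE)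
  have "y1^2 - D * y2^2 + int p * e * y3^2 - int p * f =
      int p ^ 2 * (u1^2 - D * u2^2) + int p * (e * y3^2 - f)"
    unfolding u by (simp add: algebra_simps power2_eq_square)
  then have "int p ^ 2 dvd int p * (e * y3^2 - f)"
    using c by (simp add: cong_iff_dvd_diff dvd_add_right_iff)
  then have "int p dvd e * y3^2 - f" using p by (simp add: power2_eq_square)
  then show ?thesis using y1 y2 by (simp add: cong_iff_dvd_diff)
qed

lemma anisotropic_of_iso_split:
  assumes p: "prime p" and D: "\<not> QuadRes (int p) D" and S: "iso_split p a D"
  shows "anisotropic p a"
  unfolding anisotropic_def
proof
  assume "\<forall>k. \<exists>x. \<not> (\<forall>i<3. int p dvd x i) \<and> [bform a x x = 0] (mod int p ^ k)"
  then obtain x where x: "\<not> (\<forall>i<3. int p dvd x i)" "[bform a x x = 0] (mod int p ^ 2)" by blast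
  obtain e t1 t2 t3 where d: "iso_split_at p a D e 2 t1 t2 t3" using S unfolding iso_split_iff by blast
  obtain y1 y2 y3 where y: "[bform a x x = y1^2 - D * y2^2 + int p * e * y3^2] (mod int p ^ 2)"
    and prim: "int p dvd y1 \<Longrightarrow> int p dvd y2 \<Longrightarrow> int p dvd y3 \<Longrightarrow> \<forall>i<3. int p dvd x i"
    using iso_split_at_coordinates[OF p d] by metis
  have "[y1^2 - D * y2^2 + int p * e * y3^2 = int p * 0] (mod int p ^ 2)"
    using y x(2) by (metis cong_sym cong_trans mult_zero_right)
  then have "int p dvd y1 \<and> int p dvd y2 \<and> [e * y3^2 = 0] (mod int p)"
    by (rule split_form_cong_p_multiple[OF p D])
  then have y12: "int p dvd y1" "int p dvd y2" and "int p dvd e * y3^2"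
    by (simp_all add: cong_0_iff)
  moreover have "\<not> int p dvd e" using iso_split_at_unit[OF p d] .
  moreover have pi: "prime (int p)" using p by simp
  ultimately have "int p dvd y3^2" using prime_dvd_mult_iff by blast
  then have "int p dvd y3" using pi prime_dvd_power by blast
  then show False using prim x(1) y12 by blast
qed

text \<open>The square class of \<open>e\<close> is an invariant of the splitting: evaluate the \<open>e'\<close>-splitting's
  third basis vector in coordinates of the \<open>e\<close>-splitting.\<close>
lemma iso_split_at_square_class:
  assumes p: "prime p" and D: "\<not> QuadRes (int p) D"
    and d: "iso_split_at p a D e 2 t1 t2 t3" and d': "iso_split_at p a D e' 2 s1 s2 s3"
  shows "\<exists>s. [e * s^2 = e'] (mod int p)"
proof -
  obtain y1 y2 y3 where y: "[bform a s3 s3 = y1^2 - D * y2^2 + int p * e * y3^2] (mod int p ^ 2)"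
    using iso_split_at_coordinates[OF p d] by metis
  moreover have "[bform a s3 s3 = int p * e'] (mod int p ^ 2)"
    using d' unfolding iso_split_at_def by blast
  ultimately have "[y1^2 - D * y2^2 + int p * e * y3^2 = int p * e'] (mod int p ^ 2)"
    by (metis cong_sym cong_trans)
  then show ?thesis using split_form_cong_p_multiple[OF p D] by blast
qed

lemma not_bad_value_square_class:
  assumes "[e * s^2 = e'] (mod int p)" "\<not> bad_value p e b x"
  shows "\<not> bad_value p e' b x"
proof
  assume bad: "bad_value p e' b x"
  define \<eta> where "\<eta> = x div int p ^ multiplicity (int p) x"
  obtain r where "[r^2 = e * \<eta>] (mod int p)"
    using assms(2) bad unfolding bad_value_def QuadRes_def \<eta>_def by blast
  then have "[(r * s)^2 = (e * s^2) * \<eta>] (mod int p)"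
    using cong_scalar_right[of "r^2" "e * \<eta>" _ "s^2"] by (simp add: power_mult_distrib algebra_simps)
  also have "[(e * s^2) * \<eta> = e' * \<eta>] (mod int p)" by (intro cong_scalar_right assms(1))
  finally show False using bad unfolding bad_value_def QuadRes_def \<eta>_def by blast
qed

text \<open>Values of \<open>\<langle>1, -D, p e\<rangle>\<close>: an even-order value \<open>p\<^sup>2\<^sup>j \<eta>\<close> comes from the binary part,
  an odd-order value \<open>p\<^sup>2\<^sup>j\<^sup>+\<^sup>1 \<eta>\<close> from \<open>p e y3\<^sup>2\<close>, Hensel-lifted when \<open>e \<eta>\<close> is a square.\<close>
lemma split_form_represents:
  assumes p: "prime p" "odd p" and D: "\<not> int p dvd D" and e: "\<not> int p dvd e"
    and \<beta>: "\<not> bad_value p e True \<beta>"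
  shows "\<exists>y1 y2 y3. [y1^2 - D * y2^2 + int p * e * y3^2 = \<beta>] (mod int p ^ K)"
proof (cases "\<beta> = 0")
  case True
  then show ?thesis by (intro exI[of _ 0]) simp
next
  case \<beta>0: False
  have "prime (int p)" using p(1) by simp
  then have "\<not> is_unit (int p)" using not_prime_unit by blast
  define v where "v = multiplicity (int p) \<beta>"
  define \<eta> where "\<eta> = \<beta> div int p ^ v"
  have \<beta>_eq: "\<beta> = int p ^ v * \<eta>" unfolding \<eta>_def v_def using multiplicity_dvd[of "int p" \<beta>] by simp
  have \<eta>: "\<not> int p dvd \<eta>"
    unfolding \<eta>_def v_def using multiplicity_decompose[OF \<beta>0 \<open>\<not> is_unit (int p)\<close>] .
  show ?thesis
  proof (cases "even v")
    case True
    then obtain j where j: "v = 2 * j" by (elim evenE)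
    have "\<not> int p dvd 1" "\<not> int p dvd - D" using D \<open>\<not> is_unit (int p)\<close> by auto
    then obtain z1 z2 where z: "[1 * z1^2 + (- D) * z2^2 = \<eta>] (mod int p ^ K)"
      using binary_form_represents_unit[OF p _ _ \<eta>] by blast
    have "(int p ^ j * z1)^2 - D * (int p ^ j * z2)^2 + int p * e * 0^2 =
        int p ^ v * (1 * z1^2 + (- D) * z2^2)"
      unfolding j by (simp add: power_mult_distrib power_mult algebra_simps)
    also have "[\<dots> = int p ^ v * \<eta>] (mod int p ^ K)" by (intro cong_scalar_left z)
    finally show ?thesis unfolding \<beta>_eq by blast
  next
    case v_odd: False
    then obtain j where j: "v = 2 * j + 1" by (elim oddE)
    have "QuadRes (int p) (e * \<eta>)" using \<beta> \<beta>0 v_odd unfolding bad_value_def v_def \<eta>_def by auto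
    then obtain r where r: "[r^2 = e * \<eta>] (mod int p)" unfolding QuadRes_def by blast
    obtain e' where e': "[e * e' = 1] (mod int p)"
      using exists_inverse_mod_prime_power[OF p(1) e, of 1] by auto
    have "e * (r * e')^2 = r^2 * e' * (e * e')" by (simp add: algebra_simps power2_eq_square)
    also have "[\<dots> = (e * \<eta>) * e' * 1] (mod int p)" by (intro cong_mult r e') auto
    also have "(e * \<eta>) * e' * 1 = (e * e') * \<eta>" by simp
    also have "[\<dots> = 1 * \<eta>] (mod int p)" by (intro cong_scalar_right e')
    finally have y0: "[e * (r * e')^2 = \<eta>] (mod int p ^ 1)" by simp
    have "\<not> int p dvd r * e'"
    proof
      assume "int p dvd r * e'"
      then have "int p dvd e * (r * e')^2" by (simp add: power2_eq_square)
      then show False using \<eta> cong_dvd_iff[OF y0[simplified]] by blast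
    qed
    then obtain z where z: "[e * z^2 = \<eta>] (mod int p ^ K)"
      using hensel_lift_square[OF p e _ _ y0] by auto
    have "0^2 - D * 0^2 + int p * e * (int p ^ j * z)^2 = int p ^ v * (e * z^2)"
      unfolding j by (simp add: power_mult_distrib power_mult power_add algebra_simps)
    also have "[\<dots> = int p ^ v * \<eta>] (mod int p ^ K)" by (intro cong_scalar_left z)
    finally show ?thesis unfolding \<beta>_eq by blast
  qed
qed

lemma bform_represents_of_iso_split:
  assumes p: "prime p" "odd p" and D: "\<not> int p dvd D" "\<not> QuadRes (int p) D"
    and S: "iso_split p a D" and d: "iso_split_at p a D e 2 t1 t2 t3"
    and \<beta>: "\<not> bad_value p e True \<beta>"
  shows "\<exists>y. [bform a y y = \<beta>] (mod int p ^ K)"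
proof -
  obtain e' s1 s2 s3 where d': "iso_split_at p a D e' (max K 2) s1 s2 s3"
    using S unfolding iso_split_iff by blast
  \<comment> \<open>The splitting at precision \<open>p\<^sup>K\<close> may use another \<open>e'\<close>, but in the square class of \<open>e\<close>.\<close>
  obtain s where "[e * s^2 = e'] (mod int p)"
    using iso_split_at_square_class[OF p(1) D(2) d iso_split_at_mono[OF d']] by auto
  then have "\<not> bad_value p e' True \<beta>" using not_bad_value_square_class \<beta> by blast
  then obtain y1 y2 y3 where "[y1^2 - D * y2^2 + int p * e' * y3^2 = \<beta>] (mod int p ^ max K 2)"
    using split_form_represents[OF p D(1) iso_split_at_unit[OF p(1) d']] by blast
  then have "[bform a (\<lambda>i. y1 * s1 i + y2 * s2 i + y3 * s3 i) (\<lambda>i. y1 * s1 i + y2 * s2 i + y3 * s3 i)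
      = \<beta>] (mod int p ^ max K 2)"
    using iso_split_at_value[OF d'] cong_trans by blast
  then show ?thesis using cong_prime_power_mono[of _ _ p "max K 2" K] by auto
qed

section \<open>Local representation by \<open>g\<close>\<close>

text \<open>For \<open>p \<bar> c\<close> one variable suffices: pick \<open>i\<close> with \<open>p\<close> dividing neither \<open>a\<^sub>i\<close> nor \<open>\<alpha>\<^sub>i\<close>;
  by Hensel, \<open>a\<^sub>i (c x\<^sub>i + \<alpha>\<^sub>i)\<^sup>2\<close> reaches every \<open>p\<close>-adic value congruent to \<open>a\<^sub>i \<alpha>\<^sub>i\<^sup>2\<close> modulo the
  \<open>p\<close>-part of \<open>c\<close>.\<close>
lemma rep_Zp_of_prime_dvd_c:
  assumes p: "prime p" "odd p" and pc: "int p dvd c" and c0: "c \<noteq> 0"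
    and a_gcd: "gcd (a 0) (gcd (a 1) (a 2)) = 1" and al_gcd: "gcd c (al 0 * al 1 * al 2) = 1"
    and \<beta>: "c dvd \<beta> - (\<Sum>i<3. a i * al i ^ 2)"
  shows "rep_Zp p a c al \<beta>"
  unfolding rep_Zp_def
proof
  fix K
  have pi: "prime (int p)" using p(1) by simp
  then have pu: "\<not> is_unit (int p)" using not_prime_unit by blast
  have "\<not> (\<forall>i<3. int p dvd a i)"
  proof
    assume "\<forall>i<3. int p dvd a i"
    then have "int p dvd gcd (a 0) (gcd (a 1) (a 2))"
      unfolding all_lessThan_3 by (intro gcd_greatest) auto
    then show False using a_gcd pu by (metis)
  qed
  then obtain i0 where i0: "i0 < 3" "\<not> int p dvd a i0" by blast
  have nal: "\<not> int p dvd al i0"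
  proof
    assume "int p dvd al i0"
    then have "int p dvd al 0 * al 1 * al 2" using i0(1) by (auto simp: all_lessThan_3 eval_nat_numeral less_Suc_eq)
    then show False using pc al_gcd pu by (metis gcd_greatest_iff)
  qed
  define g0 where "g0 = (\<Sum>i<3. a i * al i ^ 2)"
  define t where "t = \<beta> - g0 + a i0 * al i0 ^ 2"
  define v where "v = multiplicity (int p) c"
  define c' where "c' = c div int p ^ v"
  have cv: "c = int p ^ v * c'" unfolding c'_def v_def using multiplicity_dvd[of "int p" c] by simp
  have nc': "\<not> int p dvd c'" unfolding c'_def v_def using multiplicity_decompose[OF c0 pu] .
  have v1: "v \<ge> 1" using pc nc' cv by (cases v) auto
  have "int p ^ v dvd \<beta> - g0" using \<beta> cv unfolding g0_def by (metis dvd_mult_left)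
  then have "[a i0 * al i0 ^ 2 = t] (mod int p ^ v)" unfolding t_def
    by (simp add: cong_iff_dvd_diff algebra_simps dvd_diff_commute)
  then obtain y where y: "[y = al i0] (mod int p ^ v)" "[a i0 * y^2 = t] (mod int p ^ K)"
    using hensel_lift_square[OF p i0(2) nal v1] by blast
  obtain r where r: "y - al i0 = int p ^ v * r" using y(1) by (metis cong_iff_dvd_diff cong_sym dvdE)
  obtain c'' where c'': "[c' * c'' = 1] (mod int p ^ K)"
    using exists_inverse_mod_prime_power[OF p(1) nc'] by blast
  define z where "z = c'' * r"
  have "c * z + al i0 = int p ^ v * r * (c' * c'') + al i0" unfolding cv z_def by (simp add: algebra_simps)
  also have "[\<dots> = int p ^ v * r * 1 + al i0] (mod int p ^ K)"
    by (intro cong_add cong_scalar_left c'') auto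
  also have "int p ^ v * r * 1 + al i0 = y" using r by simp
  finally have cz: "[c * z + al i0 = y] (mod int p ^ K)" .
  define x where "x j = (if j = i0 then z else 0)" for j
  have i0_in: "i0 \<in> {..<3}" using i0 by simp
  have "gval a c al x = a i0 * (c * z + al i0)^2 + (\<Sum>j\<in>{..<3} - {i0}. a j * al j ^ 2)"
    unfolding gval_def using sum.remove[OF _ i0_in, of "\<lambda>j. a j * (c * x j + al j)^2"]
    by (simp add: x_def)
  also have "(\<Sum>j\<in>{..<3} - {i0}. a j * al j ^ 2) = g0 - a i0 * al i0 ^ 2"
    unfolding g0_def using sum.remove[OF _ i0_in, of "\<lambda>j. a j * al j ^ 2"] by simp
  also have "[a i0 * (c * z + al i0)^2 + (g0 - a i0 * al i0 ^ 2) = t + (g0 - a i0 * al i0 ^ 2)] (mod int p ^ K)"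
    using cong_trans[OF cong_scalar_left[OF cong_pow[OF cz]] y(2)] by (intro cong_add) auto
  also have "t + (g0 - a i0 * al i0 ^ 2) = \<beta>" unfolding t_def by simp
  finally show "\<exists>x. [gval a c al x = \<beta>] (mod int p ^ K)" by blast
qed

lemma p_stable_cases:
  assumes "prime p" "odd p" "p_stable p a"
  obtains "lat_rep2 p a 1 (-1)"
    | D where "\<not> int p dvd D" "\<not> QuadRes (int p) D" "iso_split p a D" "anisotropic p a"
  using assms anisotropic_of_iso_split unfolding p_stable_def by (metis even_numeral)

lemma rep_Zp_of_isotropic:
  assumes p: "prime p" "odd p" and c: "\<not> int p dvd c" and "p_stable p a" "\<not> anisotropic p a"
  shows "rep_Zp p a c al \<beta>"
proof (rule p_stable_cases[OF p assms(4)])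
  assume "lat_rep2 p a 1 (-1)"
  then show ?thesis using rep_Zp_of_bform[OF p(1) c] bform_represents_of_hyperbolic[OF p(2)] by blast
qed (use assms(5) in blast)

lemma rep_Zp_of_anisotropic:
  assumes p: "prime p" "odd p" and c: "\<not> int p dvd c" and "p_stable p a" "anisotropic p a"
  obtains e where "\<not> int p dvd e"
    and "\<And>\<beta>. \<not> bad_value p e True \<beta> \<Longrightarrow> rep_Zp p a c al \<beta>"
proof (rule p_stable_cases[OF p assms(4)])
  assume "lat_rep2 p a 1 (-1)"
  then show ?thesis using not_anisotropic_of_hyperbolic[OF p(1)] assms(5) by blast
next
  fix D assume D: "\<not> int p dvd D" "\<not> QuadRes (int p) D" "iso_split p a D"
  then obtain e t1 t2 t3 where d: "iso_split_at p a D e 2 t1 t2 t3"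
    unfolding iso_split_iff by blast
  show ?thesis
  proof (rule that[OF iso_split_at_unit[OF p(1) d]])
    fix \<beta> :: int assume "\<not> bad_value p e True \<beta>"
    then show "rep_Zp p a c al \<beta>"
      using rep_Zp_of_bform[OF p(1) c] bform_represents_of_iso_split[OF p D d] by blast
  qed
qed

section \<open>Global representation and counting\<close>

lemma finite_anisotropic_primes:
  assumes "\<forall>i<3. a i \<noteq> 0"
  shows "finite {p. prime p \<and> odd p \<and> anisotropic p a}"
proof (rule finite_subset)
  show "{p. prime p \<and> odd p \<and> anisotropic p a} \<subseteq> {..nat \<bar>a 0 * a 1 * a 2\<bar>}"
  proof
    fix p assume "p \<in> {p. prime p \<and> odd p \<and> anisotropic p a}"
    then have "\<exists>i<3. int p dvd a i" using not_anisotropic_of_units by blast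
    then have "int p dvd a 0 \<or> int p dvd a 1 \<or> int p dvd a 2"
      using all_lessThan_3[of "\<lambda>i. \<not> int p dvd a i"] by auto
    then have "int p dvd a 0 * a 1 * a 2" by (elim disjE) (simp_all add: dvd_mult dvd_mult2)
    moreover have "a 0 * a 1 * a 2 \<noteq> 0" using assms unfolding all_lessThan_3 by simp
    ultimately have "\<bar>int p\<bar> \<le> \<bar>a 0 * a 1 * a 2\<bar>" by (intro dvd_imp_le_int)
    then show "p \<in> {..nat \<bar>a 0 * a 1 * a 2\<bar>}" by simp
  qed
qed simp

lemma Inf_range_gval_le:
  assumes "\<forall>i<3. a i \<ge> 0"
  shows "Inf (range (gval a c al)) \<le> (\<Sum>i<3. a i * al i ^ 2)"
proof -
  have "gval a c al x \<ge> 0" for x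
    unfolding gval_def using assms by (intro sum_nonneg) (simp add: lessThan_iff)
  then have "bdd_below (range (gval a c al))" by (intro bdd_belowI[of _ 0]) auto
  moreover have "gval a c al (\<lambda>_. 0) = (\<Sum>i<3. a i * al i ^ 2)" unfolding gval_def by simp
  ultimately show ?thesis by (metis cInf_lower rangeI)
qed

lemma rep_R_of_ge:
  assumes a: "\<forall>i<3. a i > 0" and c: "c \<noteq> 0" and \<beta>: "(\<Sum>i<3. a i * al i ^ 2) \<le> \<beta>"
  shows "rep_R a c al \<beta>"
proof -
  define r :: real where "r = of_int (\<beta> - (a 1 * al 1 ^ 2 + a 2 * al 2 ^ 2)) / of_int (a 0)"
  have a0: "a 0 > 0" using a by auto
  then have "a 0 * al 0 ^ 2 \<ge> 0" by simp
  then have "\<beta> - (a 1 * al 1 ^ 2 + a 2 * al 2 ^ 2) \<ge> 0" using \<beta> unfolding sum_lessThan_3 by linarith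
  then have "r \<ge> 0" unfolding r_def using a0 by (intro divide_nonneg_pos of_int_nonneg) auto
  moreover have "a 0 * r = \<beta> - (a 1 * al 1 ^ 2 + a 2 * al 2 ^ 2)" unfolding r_def using a0 by simp
  ultimately have ar: "a 0 * r = \<beta> - (a 1 * al 1 ^ 2 + a 2 * al 2 ^ 2)" "r \<ge> 0" by auto
  define x :: "nat \<Rightarrow> real" where "x i = (if i = 0 then (sqrt r - al 0) / c else 0)" for i
  have "(\<Sum>i<3. a i * (c * x i + al i)^2) = a 0 * (sqrt r)^2 + a 1 * al 1 ^ 2 + a 2 * al 2 ^ 2"
    unfolding sum_lessThan_3 x_def using c by simp
  also have "\<dots> = \<beta>" using ar by simp
  finally show ?thesis unfolding rep_R_def by blast
qed

lemma rep_Z_of_locally_good: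
  assumes tight: "tight_regular a c al" and a_pos: "\<forall>i<3. a i > 0"
    and a_gcd: "gcd (a 0) (gcd (a 1) (a 2)) = 1" and al_gcd: "gcd c (al 0 * al 1 * al 2) = 1"
    and stable: "\<forall>p. prime p \<and> \<not> int p dvd c \<longrightarrow> p_stable p a" and c: "c > 0"
    and \<beta>: "\<beta> = (\<Sum>i<3. a i * al i ^ 2) + c * k" "k \<ge> 0"
    and rep_2_3: "rep_Zp 2 a c al \<beta>" "rep_Zp 3 a c al \<beta>"
    and rep_anisotropic:
      "\<And>p. prime p \<Longrightarrow> p \<ge> 5 \<Longrightarrow> anisotropic p a \<Longrightarrow> \<not> int p dvd c \<Longrightarrow> rep_Zp p a c al \<beta>"
  shows "rep_Z a c al \<beta>"
proof -
  have ge: "(\<Sum>i<3. a i * al i ^ 2) \<le> \<beta>" using \<beta> c by simp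
  have "rep_Zp p a c al \<beta>" if p: "prime p" for p
  proof (cases "p \<le> 3")
    case True
    then have "p = 2 \<or> p = 3" using prime_ge_2_nat[OF p] by auto
    then show ?thesis using rep_2_3 by blast
  next
    case False
    then have odd: "odd p" using prime_odd_nat[OF p] by simp
    then have "p \<ge> 5" using False by (auto elim!: oddE)
    moreover have "c dvd \<beta> - (\<Sum>i<3. a i * al i ^ 2)" using \<beta> by simp
    ultimately show ?thesis
      using rep_Zp_of_prime_dvd_c[OF p odd _ _ a_gcd al_gcd] rep_anisotropic[OF p]
        rep_Zp_of_isotropic[OF p odd] stable p c by force
  qed
  moreover have "Inf (range (gval a c al)) \<le> \<beta>"
    using Inf_range_gval_le[of a c al] a_pos ge by force
  ultimately show ?thesis using tight rep_R_of_ge[OF a_pos _ ge] c unfolding tight_regular_def by force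
qed

lemma card_filter_ge_card_minus_bad:
  assumes "finite S" "finite W" "\<And>u. u \<in> S \<Longrightarrow> \<forall>p\<in>W. \<not> bad p u \<Longrightarrow> good u"
  shows "real (card S) - (\<Sum>p\<in>W. real (card {u \<in> S. bad p u})) \<le> real (card {u \<in> S. good u})"
proof -
  have "S \<subseteq> {u \<in> S. good u} \<union> (\<Union>p\<in>W. {u \<in> S. bad p u})" using assms(3) by blast
  then have "card S \<le> card ({u \<in> S. good u} \<union> (\<Union>p\<in>W. {u \<in> S. bad p u}))"
    using assms(1,2) by (intro card_mono) auto
  also have "\<dots> \<le> card {u \<in> S. good u} + card (\<Union>p\<in>W. {u \<in> S. bad p u})" by (rule card_Un_le)
  also have "card (\<Union>p\<in>W. {u \<in> S. bad p u}) \<le> (\<Sum>p\<in>W. card {u \<in> S. bad p u})"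
    using assms(2) by (rule card_UN_le)
  finally show ?thesis by (simp flip: of_nat_sum)
qed

lemma psi_pp_nonneg: "psi_pp p i \<ge> 0"
  unfolding psi_pp_def by (simp add: divide_nonneg_pos add_nonneg_nonneg)

lemma psi_nonneg: "psi p n \<ge> 0"
  unfolding psi_def by (intro add_nonneg_nonneg sum_nonneg mult_nonneg_nonneg psi_pp_nonneg) auto

lemma psi_pp_le_power:
  assumes "p \<ge> 1" "i \<ge> 1"
  shows "psi_pp p i \<le> real p ^ i"
proof -
  have m: "2 * real p + 1 \<le> (2 * real p + 1) * real p ^ i"
    using assms by (simp add: mult_left_mono[of 1 "real p ^ i"])
  moreover have "real p + 2 \<le> 2 * real p + 1" using assms(1) by simp
  ultimately have "real p + 2 \<le> (2 * real p + 1) * real p ^ i" by linarith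
  then show ?thesis using m unfolding psi_pp_def by (auto simp: divide_le_eq algebra_simps)
qed

lemma psi_le:
  assumes "p \<ge> 1"
  shows "psi p n \<le> 1 + real n * real n"
proof -
  have "real ((n div p ^ i) mod p) * psi_pp p i \<le> real n" if "i \<in> {1..n}" for i
  proof -
    have "real ((n div p ^ i) mod p) * psi_pp p i \<le> real ((n div p ^ i) mod p) * real p ^ i"
      using psi_pp_le_power[OF assms, of i] that by (intro mult_left_mono) auto
    also have "\<dots> \<le> real (n div p ^ i) * real p ^ i" by (intro mult_right_mono) auto
    also have "\<dots> = real (n div p ^ i * p ^ i)" by simp
    also have "\<dots> \<le> real n" by (simp del: of_nat_mult)
    finally show ?thesis .
  qed
  then have "(\<Sum>i\<in>{1..n}. real ((n div p ^ i) mod p) * psi_pp p i) \<le> (\<Sum>i\<in>{1..n}. real n)"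
    by (rule sum_mono)
  then show ?thesis unfolding psi_def by auto
qed

lemma eta_le_of_subset:
  assumes W: "W \<subseteq> {p. prime p \<and> p \<ge> 5}" "finite W" "card W \<le> s"
  shows "eta n s \<le> real n - (\<Sum>p\<in>W. psi p n)"
proof -
  have "{p::nat. prime p} - {..<5} = {p. prime p \<and> p \<ge> 5}" by auto
  then have "infinite {p::nat. prime p \<and> p \<ge> 5}"
    using Diff_infinite_finite[OF finite_lessThan primes_infinite] by metis
  then have "infinite ({p. prime p \<and> p \<ge> 5} - W)" using Diff_infinite_finite[OF W(2)] by blast
  then obtain X where X: "finite X" "card X = s - card W" "X \<subseteq> {p. prime p \<and> p \<ge> 5} - W"
    using infinite_arbitrarily_large by blast
  define ES where "ES = {real n - (\<Sum>p\<in>P'. psi p n) | P'.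
      P' \<subseteq> {p. prime p \<and> p \<ge> 5} \<and> finite P' \<and> card P' = s}"
  have "W \<inter> X = {}" using X(3) by auto
  then have "real n - (\<Sum>p\<in>W \<union> X. psi p n) \<in> ES"
    unfolding ES_def using W X card_Un_disjoint[OF W(2) X(1)] by auto
  moreover have "bdd_below ES"
  proof
    fix x assume "x \<in> ES"
    then obtain P' where P': "x = real n - (\<Sum>p\<in>P'. psi p n)" "P' \<subseteq> {p. prime p \<and> p \<ge> 5}" "card P' = s"
      unfolding ES_def by blast
    have "(\<Sum>p\<in>P'. psi p n) \<le> (\<Sum>p\<in>P'. 1 + real n * real n)"
      using P'(2) by (intro sum_mono psi_le) auto
    then show "real n - real s * (1 + real n * real n) \<le> x" using P' by simp
  qed
  ultimately have "eta n s \<le> real n - (\<Sum>p\<in>W \<union> X. psi p n)"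
    unfolding eta_def ES_def[symmetric] by (rule cInf_lower)
  also have "\<dots> \<le> real n - (\<Sum>p\<in>W. psi p n)"
    using \<open>W \<inter> X = {}\<close> W(2) X(1) by (simp add: sum.union_disjoint sum_nonneg psi_nonneg)
  finally show ?thesis .
qed

lemma eta_le_card_filter:
  assumes W: "W \<subseteq> {p. prime p \<and> p \<ge> 5}" "finite W" "card W \<le> s"
    and bad: "\<And>p. p \<in> W \<Longrightarrow> real (card {u \<in> {0..<n}. bad p u}) \<le> psi p n"
    and good: "\<And>u. u < n \<Longrightarrow> \<forall>p\<in>W. \<not> bad p u \<Longrightarrow> good u"
  shows "eta n s \<le> real (card {u \<in> {0..<n}. good u})"
proof -
  have "eta n s \<le> real n - (\<Sum>p\<in>W. psi p n)" using eta_le_of_subset[OF W] .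
  also have "\<dots> \<le> real n - (\<Sum>p\<in>W. real (card {u \<in> {0..<n}. bad p u}))"
    using bad by (simp add: sum_mono)
  also have "\<dots> \<le> real (card {u \<in> {0..<n}. good u})"
    using card_filter_ge_card_minus_bad[of "{0..<n}" W bad good] W(2) good by simp
  finally show ?thesis .
qed

lemma prime_not_dvd_delta_mult:
  assumes p: "prime p" "p \<ge> 5" and "\<not> int p dvd c" "coprime k p"
  shows "\<not> int p dvd delta m * c * int k"
proof -
  have "\<not> int p dvd delta m"
  proof
    assume "int p dvd delta m"
    then have "int p dvd 4" unfolding delta_def by (auto split: if_splits intro: dvd_trans)
    then show False using p(2) by (auto dest!: zdvd_imp_le)
  qed
  moreover have "\<not> p dvd k"
  proof
    assume "p dvd k"
    then have "is_unit p" using coprime_common_divisor[OF assms(4)] by auto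
    then show False using prime_gt_1_nat[OF p(1)] by simp
  qed
  moreover have "prime (int p)" using p(1) by simp
  ultimately show ?thesis using assms(3) by (simp add: prime_dvd_mult_iff)
qed

theorem lemma3p5:
  fixes m n s \<kappa> \<nu> :: nat and c :: int and a al :: "nat \<Rightarrow> int" and T :: "nat set"
  assumes m4: "m \<ge> 4"
    and c_def: "c = cconst m"
    and a_pos: "\<forall>i<3. a i > 0"
    and a_ord: "a 0 \<le> a 1" "a 1 \<le> a 2"
    and a_gcd: "gcd (a 0) (gcd (a 1) (a 2)) = 1"
    and stable: "\<forall>p. prime p \<and> \<not> int p dvd c \<longrightarrow> p_stable p a"
    and al_bd: "\<forall>i<3. 0 < al i \<and> 2 * al i < c"
    and al_gcd: "gcd c (al 0 * al 1 * al 2) = 1"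
    and tight: "tight_regular a c al"
    and T_def: "T = {p. prime p \<and> p \<ge> 5 \<and> anisotropic p a}"
    and kappa: "\<kappa> > 0" "\<forall>p\<in>T. coprime \<kappa> p"
    and nu: "\<forall>u::nat. rep_Zp 2 a c al (delta m * c * int (\<kappa> * u + \<nu>) + (\<Sum>i<3. a i * al i ^ 2))
                   \<and> rep_Zp 3 a c al (delta m * c * int (\<kappa> * u + \<nu>) + (\<Sum>i<3. a i * al i ^ 2))"
    and s: "s > 0" "s \<ge> card T"
    and n: "n > 0"
  shows "real (card {u \<in> {0..<n}.
            rep_Z a c al (delta m * c * int (\<kappa> * u + \<nu>) + (\<Sum>i<3. a i * al i ^ 2))}) \<ge> eta n s"
proof -
  define \<beta> where "\<beta> u = delta m * c * int (\<kappa> * u + \<nu>) + (\<Sum>i<3. a i * al i ^ 2)" for u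
  define A where "A = delta m * c * int \<nu> + (\<Sum>i<3. a i * al i ^ 2)"
  have \<beta>_eq: "\<beta> u = A + delta m * c * int \<kappa> * int u" for u
    unfolding \<beta>_def A_def by (simp add: algebra_simps)
  have c: "c > 0" using al_bd by force
  define W where "W = {p \<in> T. \<not> int p dvd c}"
  have W: "prime p" "p \<ge> 5" "odd p" "\<not> int p dvd c" "anisotropic p a" "coprime \<kappa> p" if "p \<in> W" for p
    using that kappa(2) prime_odd_nat[of p] unfolding W_def T_def by auto
  have "finite T"
    by (rule finite_subset[OF _ finite_anisotropic_primes]) (use a_pos prime_odd_nat in \<open>auto simp: T_def\<close>)
  then have finW: "finite W" and cardW: "card W \<le> s" using s(2) card_mono[of T W] unfolding W_def by auto
  have "\<forall>p\<in>W. \<exists>e. \<not> int p dvd e \<and> (\<forall>\<beta>. \<not> bad_value p e True \<beta> \<longrightarrow> rep_Zp p a c al \<beta>)"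
    using rep_Zp_of_anisotropic W stable by metis
  then obtain e where e: "\<And>p. p \<in> W \<Longrightarrow>
      \<not> int p dvd e p \<and> (\<forall>\<beta>. \<not> bad_value p (e p) True \<beta> \<longrightarrow> rep_Zp p a c al \<beta>)"
    by (metis bchoice)
  have "eta n s \<le> real (card {u \<in> {0..<n}. rep_Z a c al (\<beta> u)})"
  proof (rule eta_le_card_filter[OF _ finW cardW, where bad = "\<lambda>p u. bad_value p (e p) True (\<beta> u)"])
    show "W \<subseteq> {p. prime p \<and> p \<ge> 5}" using W by blast
    show "real (card {u \<in> {0..<n}. bad_value p (e p) True (\<beta> u)}) \<le> psi p n" if "p \<in> W" for p
      unfolding \<beta>_eq using card_bad_le_psi W(1,3)[OF that] prime_not_dvd_delta_mult W[OF that] e[OF that]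
      by blast
    show "rep_Z a c al (\<beta> u)" if "\<forall>p\<in>W. \<not> bad_value p (e p) True (\<beta> u)" for u
      by (rule rep_Z_of_locally_good[OF tight a_pos a_gcd al_gcd stable c, where k = "delta m * int (\<kappa> * u + \<nu>)"])
        (use nu e that in \<open>auto simp: \<beta>_def W_def T_def delta_def algebra_simps\<close>)
  qed
  then show ?thesis unfolding \<beta>_def .
qed

end
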